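(* Let $M\in\mathbb N$, $M\ge1$, and $x_0,x_1\in\{x:|x-1|\le p^{-M}\}$. If $\lambda_0,\lambda_1\in\Lambda$ satisfy $|\lambda_0-\lambda_1|=|x_0-x_1|$, then $$|Q^M_{\lambda_0}(x_0)-Q^M_{\lambda_1}(x_1)|=p^M|\lambda_0-\lambda_1|.$$
   Context: Let $p$ be a prime, $\mathbb C_p$ with $p$-adic absolute value, $|p|=1/p$. $\Lambda=\{\lambda\in\mathbb C_p:|\lambda-1|<1\}$, $P_\lambda(z)=\frac{\lambda}{p}z^p+\left(1-\frac{\lambda}{p}\right)z^{p+1}$, $\rho=p^{-1/(p-1)}$. Fix $\hat r\in|\mathbb C_p^*|$, $\hat r>1$, $B=\{z:|z|\le\hat r\}$; $\mathcal H(B)$ is the ring of power series $\sum a_iz^i$ convergent on $B$ with norm $\|f\|_B=\sup_i|a_i|\hat r^{\,i}$. Fix $Q\in\mathcal H(B)$ with $\|Q\|_B<\rho$, $Q^*_\lambda=P_\lambda+Q$, and let $h(\lambda)$ be the unique fixed point of $Q^*_\lambda$ in $\{z:|z-1|\le|Q(1)|/p\}$. Define $Q_\lambda(z)=P_\lambda(z+h(\lambda)-1)+Q(z+h(\lambda)-1)+1-h(\lambda)$ for $z\in B$; $Q_\lambda^n$ denotes the $n$-th iterate. *)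

theory Defs
  imports Complex_Main "HOL-Computational_Algebra.Polynomial" "HOL-Computational_Algebra.Primes"
begin

text \<open>An abstract model of the field C_p: a field 'a with an absolute value absv that
  (i) is a non-archimedean absolute value, (ii) restricts on the integers to the p-adic
  absolute value with |p| = 1/p, (iii) is complete, (iv) 'a is algebraically closed, and
  (v) the algebraic numbers (roots of nonzero integer polynomials) are dense.
  These properties characterise C_p up to isometric isomorphism.\<close>

definition is_Cp :: "nat \<Rightarrow> ('a::field \<Rightarrow> real) \<Rightarrow> bool" where
  "is_Cp p absv \<longleftrightarrow>
     (\<forall>x. absv x \<ge> 0) \<and>
     (\<forall>x. absv x = 0 \<longleftrightarrow> x = 0) \<and>
     (\<forall>x y. absv (x * y) = absv x * absv y) \<and>
     (\<forall>x y. absv (x + y) \<le> max (absv x) (absv y)) \<and>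
     (\<forall>n::int. n \<noteq> 0 \<longrightarrow> absv (of_int n) = real p powr (- real (multiplicity (int p) n))) \<and>
     (\<forall>X::nat \<Rightarrow> 'a. (\<forall>e>0. \<exists>N. \<forall>m\<ge>N. \<forall>n\<ge>N. absv (X m - X n) < e)
          \<longrightarrow> (\<exists>L. (\<lambda>n. absv (X n - L)) \<longlonglongrightarrow> 0)) \<and>
     (\<forall>q::'a poly. degree q > 0 \<longrightarrow> (\<exists>x. poly q x = 0)) \<and>
     (\<forall>x. \<forall>e>0. \<exists>y. absv (x - y) < e \<and>
          (\<exists>q::int poly. q \<noteq> 0 \<and> poly (map_poly of_int q) y = 0))"

definition ps_sums :: "('a::field \<Rightarrow> real) \<Rightarrow> (nat \<Rightarrow> 'a) \<Rightarrow> 'a \<Rightarrow> 'a \<Rightarrow> bool" where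
  "ps_sums absv a z s \<longleftrightarrow> (\<lambda>n. absv ((\<Sum>i<n. a i * z ^ i) - s)) \<longlonglongrightarrow> 0"

definition ps_eval :: "('a::field \<Rightarrow> real) \<Rightarrow> (nat \<Rightarrow> 'a) \<Rightarrow> 'a \<Rightarrow> 'a" where
  "ps_eval absv a z = (THE s. ps_sums absv a z s)"

definition in_H :: "('a::field \<Rightarrow> real) \<Rightarrow> real \<Rightarrow> (nat \<Rightarrow> 'a) \<Rightarrow> bool" where
  "in_H absv r a \<longleftrightarrow> (\<forall>z. absv z \<le> r \<longrightarrow> (\<exists>s. ps_sums absv a z s))"

definition H_norm :: "('a::field \<Rightarrow> real) \<Rightarrow> real \<Rightarrow> (nat \<Rightarrow> 'a) \<Rightarrow> real" where
  "H_norm absv r a = (SUP i. absv (a i) * r ^ i)"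

definition P_lam :: "nat \<Rightarrow> 'a::field \<Rightarrow> 'a \<Rightarrow> 'a" where
  "P_lam p lam z = lam / of_nat p * z ^ p + (1 - lam / of_nat p) * z ^ (p + 1)"

definition Qstar :: "nat \<Rightarrow> ('a::field \<Rightarrow> real) \<Rightarrow> (nat \<Rightarrow> 'a) \<Rightarrow> 'a \<Rightarrow> 'a \<Rightarrow> 'a" where
  "Qstar p absv a lam z = P_lam p lam z + ps_eval absv a z"

definition hfix :: "nat \<Rightarrow> ('a::field \<Rightarrow> real) \<Rightarrow> (nat \<Rightarrow> 'a) \<Rightarrow> 'a \<Rightarrow> 'a" where
  "hfix p absv a lam = (THE z. absv (z - 1) \<le> absv (ps_eval absv a 1) / real p \<and> Qstar p absv a lam z = z)"

definition Qlam :: "nat \<Rightarrow> ('a::field \<Rightarrow> real) \<Rightarrow> (nat \<Rightarrow> 'a) \<Rightarrow> 'a \<Rightarrow> 'a \<Rightarrow> 'a" where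
  "Qlam p absv a lam z =
     (let h = hfix p absv a lam in
      P_lam p lam (z + h - 1) + ps_eval absv a (z + h - 1) + 1 - h)"

end

(*
  Write points near 1 as 1 + s. As |p| = 1/p and |lam| = 1, the map
    fixpoint_map lam s = s + (p/lam) (Qstar_lam (1 + s) - (1 + s))
                       = (p/lam) base_displacement s - s ((1 + s)^p - 1),
  where base_displacement is 1-Lipschitz on the unit disc, is a 1/p-contraction of the
  disc |s| <= 1/p and depends on lam with Lipschitz constant 1/p. Its fixed points are those
  of Qstar_lam, so the ultrametric Banach fixed point theorem gives h(lam) = 1 + t(lam) with
  |t(lam0) - t(lam1)| <= |lam0 - lam1|/p. Conjugating by the translation,
  Q_lam (1 + w) = 1 - (lam/p) w + R_lam w, where R is 1-Lipschitz jointly in (lam, w) on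
  |w| <= 1/p. Since |lam/p| = p, the linear term strictly dominates, so
  |Q_lam0 z0 - Q_lam1 z1| = p |z0 - z1| whenever |z0 - 1|, |z1 - 1| <= 1/p and
  |lam0 - lam1| <= |z0 - z1|. Starting from |x_i - 1| <= p^-M, the iterates of order k < M
  stay in that disc, so each of the M steps multiplies the distance by exactly p.
*)
theory Submission
  imports Defs
begin

locale ultrametric_abs =
  fixes absv :: "'a::field \<Rightarrow> real"
  assumes absv_nonneg [simp]: "absv x \<ge> 0"
    and absv_eq_0_iff [simp]: "absv x = 0 \<longleftrightarrow> x = 0"
    and absv_mult [simp]: "absv (x * y) = absv x * absv y"
    and absv_add_le_max: "absv (x + y) \<le> max (absv x) (absv y)"
begin

lemma absv_0 [simp]: "absv 0 = 0"
  by simp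

lemma absv_not_less_0 [simp]: "\<not> absv x < 0"
  using absv_nonneg[of x] by linarith

lemma absv_le_0_iff [simp]: "absv x \<le> 0 \<longleftrightarrow> x = 0"
  using absv_nonneg[of x] by (auto simp del: absv_nonneg)

lemma absv_pos_iff [simp]: "absv x > 0 \<longleftrightarrow> x \<noteq> 0"
  using absv_le_0_iff[of x] by linarith

lemma absv_one [simp]: "absv 1 = 1"
proof -
  have "absv 1 * absv 1 = absv 1 * 1"
    using absv_mult[of 1 1] by simp
  then show ?thesis
    by (simp only: mult_cancel_left) simp
qed

lemma absv_minus [simp]: "absv (- x) = absv x"
proof -
  have "absv (-1) * absv (-1) = 1"
    using absv_mult[of "-1" "-1"] by simp
  then have "absv (-1) = 1"
    using absv_nonneg[of "-1"] by (simp flip: power2_eq_square add: power2_eq_1_iff)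
  then show ?thesis
    using absv_mult[of "-1" x] by simp
qed

lemma absv_minus_commute: "absv (x - y) = absv (y - x)"
  by (metis absv_minus minus_diff_eq)

lemma absv_power [simp]: "absv (x ^ n) = absv x ^ n"
  by (induction n) auto

lemma absv_inverse: "absv (inverse x) = inverse (absv x)"
proof (cases "x = 0")
  case False
  then have "absv x * absv (inverse x) = 1"
    by (simp flip: absv_mult)
  then show ?thesis
    by (simp add: inverse_unique)
qed simp

lemma absv_divide [simp]: "absv (x / y) = absv x / absv y"
  by (simp add: divide_inverse absv_inverse)

lemma absv_add_le: "absv x \<le> B \<Longrightarrow> absv y \<le> B \<Longrightarrow> absv (x + y) \<le> B"
  using absv_add_le_max[of x y] by linarith

lemma absv_diff_le: "absv x \<le> B \<Longrightarrow> absv y \<le> B \<Longrightarrow> absv (x - y) \<le> B"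
  using absv_add_le[of x B "- y"] by simp

lemma absv_add_less: "absv x < B \<Longrightarrow> absv y < B \<Longrightarrow> absv (x + y) < B"
  using absv_add_le_max[of x y] by linarith

lemma absv_add_dominant: "absv y < absv x \<Longrightarrow> absv (x + y) = absv x"
  using absv_add_le_max[of x y] absv_add_le_max[of "x + y" "- y"] by auto

lemma absv_one_plus_le_1: "absv s \<le> 1 \<Longrightarrow> absv (1 + s) \<le> 1"
  by (intro absv_add_le) auto

lemma absv_eq_1_if_near_1: "absv (x - 1) < 1 \<Longrightarrow> absv x = 1"
  using absv_add_dominant[of "x - 1" 1] by simp

lemma absv_sum_le:
  "finite A \<Longrightarrow> (\<And>k. k \<in> A \<Longrightarrow> absv (f k) \<le> B) \<Longrightarrow> 0 \<le> B \<Longrightarrow> absv (sum f A) \<le> B"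
  by (induction A rule: finite_induct) (auto intro!: absv_add_le)

lemma absv_mult_diff_le:
  "absv (x0 * y0 - x1 * y1) \<le> max (absv x0 * absv (y0 - y1)) (absv (x0 - x1) * absv y1)"
proof -
  have "x0 * y0 - x1 * y1 = x0 * (y0 - y1) + (x0 - x1) * y1"
    by (simp add: algebra_simps)
  then show ?thesis
    using absv_add_le_max[of "x0 * (y0 - y1)" "(x0 - x1) * y1"] by simp
qed

lemma absv_power_diff_le:
  assumes "absv x \<le> 1" "absv y \<le> 1"
  shows "absv (x ^ n - y ^ n) \<le> absv (x - y)"
proof (induction n)
  case (Suc n)
  have "absv (x * x ^ n - y * y ^ n)
      \<le> max (absv x * absv (x ^ n - y ^ n)) (absv (x - y) * absv (y ^ n))"
    by (rule absv_mult_diff_le)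
  also have "\<dots> \<le> absv (x - y)"
  proof -
    have "absv x * absv (x ^ n - y ^ n) \<le> 1 * absv (x - y)"
      using assms(1) Suc.IH by (intro mult_mono) auto
    moreover have "absv (x - y) * absv (y ^ n) \<le> absv (x - y) * 1"
      using assms(2) by (intro mult_left_mono) (auto simp: power_le_one)
    ultimately show ?thesis
      by simp
  qed
  finally show ?case
    by simp
qed simp

lemma limit_dist_le:
  assumes X: "(\<lambda>n. absv (X n - s)) \<longlonglongrightarrow> 0" and Y: "(\<lambda>n. absv (Y n - s')) \<longlonglongrightarrow> 0"
    and B: "\<And>n. absv (X n - Y n) \<le> B"
  shows "absv (s - s') \<le> B"
proof (rule ccontr)
  assume "\<not> ?thesis"
  then have e: "absv (s - s') - B > 0"
    by simp
  obtain n where n: "absv (X n - s) < absv (s - s') - B" "absv (Y n - s') < absv (s - s') - B"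
    using eventually_happens'[OF sequentially_bot
        eventually_conj[OF order_tendstoD(2)[OF X e] order_tendstoD(2)[OF Y e]]]
    by blast
  have "0 \<le> B"
    using B[of 0] absv_nonneg order_trans by blast
  then have "absv (s - X n) < absv (s - s')" "absv (X n - Y n) < absv (s - s')"
    "absv (Y n - s') < absv (s - s')"
    using n B[of n] e absv_minus_commute[of s "X n"] by linarith+
  then have "absv ((s - X n) + ((X n - Y n) + (Y n - s'))) < absv (s - s')"
    by (intro absv_add_less)
  then show False
    by simp
qed

lemma limit_unique:
  "(\<lambda>n. absv (X n - s)) \<longlonglongrightarrow> 0 \<Longrightarrow> (\<lambda>n. absv (X n - s')) \<longlonglongrightarrow> 0 \<Longrightarrow> s = s'"
  using limit_dist_le[of X s X s' 0] by simp

lemma fixed_point_dist_le: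
  assumes "c < 1" and contr: "absv (f x - f y) \<le> c * absv (x - y)"
    and "f x = x" "g y = y"
  shows "absv (x - y) \<le> absv (f y - g y)"
proof -
  have "x - y = (f x - f y) + (f y - g y)"
    using assms(3,4) by simp
  then have le_max: "absv (x - y) \<le> max (c * absv (x - y)) (absv (f y - g y))"
    using absv_add_le_max[of "f x - f y" "f y - g y"] contr by auto
  show ?thesis
  proof (cases "absv (x - y) \<le> c * absv (x - y)")
    case True
    then have "x = y"
      using \<open>c < 1\<close> by (simp add: mult_le_cancel_right1)
    then show ?thesis
      by simp
  next
    case False
    then show ?thesis
      using le_max by (simp add: le_max_iff_disj)
  qed
qed

lemma absv_diff_le_telescope:
  assumes steps: "\<And>n. absv (X (Suc n) - X n) \<le> b n" and "decseq b" and "n \<le> m"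
  shows "absv (X m - X n) \<le> b n"
  using \<open>n \<le> m\<close>
proof (induction m rule: dec_induct)
  case base
  show ?case
    using order_trans[OF absv_nonneg steps[of n]] by simp
next
  case (step k)
  have "absv (X (Suc k) - X k) \<le> b n"
    using steps[of k] decseqD[OF \<open>decseq b\<close> \<open>n \<le> k\<close>] by linarith
  then have "absv ((X (Suc k) - X k) + (X k - X n)) \<le> b n"
    using step.IH by (rule absv_add_le)
  then show ?case
    by simp
qed

lemma cauchy_if_steps_le:
  assumes steps: "\<And>n. absv (X (Suc n) - X n) \<le> b n" and "decseq b" and "b \<longlonglongrightarrow> 0"
  shows "\<forall>e>0. \<exists>N. \<forall>m\<ge>N. \<forall>n\<ge>N. absv (X m - X n) < e"
proof (intro allI impI)
  fix e :: real
  assume "e > 0"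
  then obtain N where N: "b N < e"
    using eventually_happens'[OF sequentially_bot order_tendstoD(2)[OF \<open>b \<longlonglongrightarrow> 0\<close>]]
    by blast
  have close: "absv (X m - X n) < e" if "N \<le> n" "n \<le> m" for m n
    using absv_diff_le_telescope[OF steps \<open>decseq b\<close> \<open>n \<le> m\<close>]
      decseqD[OF \<open>decseq b\<close> \<open>N \<le> n\<close>] N
    by linarith
  have "absv (X m - X n) < e" if "N \<le> m" "N \<le> n" for m n
  proof (cases "n \<le> m")
    case True
    then show ?thesis
      using close \<open>N \<le> n\<close> by blast
  next
    case False
    then show ?thesis
      using close[of m n] \<open>N \<le> m\<close> absv_minus_commute[of "X m" "X n"] by simp
  qed
  then show "\<exists>N. \<forall>m\<ge>N. \<forall>n\<ge>N. absv (X m - X n) < e"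
    by blast
qed

lemma ps_sums_unique: "ps_sums absv a z s \<Longrightarrow> ps_sums absv a z s' \<Longrightarrow> s = s'"
  unfolding ps_sums_def by (rule limit_unique)

lemma ps_sums_ps_eval: "ps_sums absv a z s \<Longrightarrow> ps_sums absv a z (ps_eval absv a z)"
  unfolding ps_eval_def by (rule theI[of "ps_sums absv a z"]) (auto intro: ps_sums_unique)

lemma absv_ps_eval_le_1:
  assumes "\<And>i. absv (a i) \<le> 1" "absv z \<le> 1" "ps_sums absv a z s"
  shows "absv (ps_eval absv a z) \<le> 1"
proof -
  have "absv (\<Sum>i<n. a i * z ^ i) \<le> 1" for n
    using assms(1,2) by (intro absv_sum_le) (auto intro!: mult_le_one power_le_one)
  then show ?thesis
    using ps_sums_ps_eval[OF assms(3)] limit_dist_le[of _ "ps_eval absv a z" "\<lambda>n. 0" 0 1]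
    unfolding ps_sums_def by simp
qed

lemma ps_eval_lipschitz:
  assumes "\<And>i. absv (a i) \<le> 1" "absv u \<le> 1" "absv v \<le> 1"
    and "ps_sums absv a u su" "ps_sums absv a v sv"
  shows "absv (ps_eval absv a u - ps_eval absv a v) \<le> absv (u - v)"
proof -
  have "absv (a i) * absv (u ^ i - v ^ i) \<le> 1 * absv (u - v)" for i
    using assms(1-3) absv_power_diff_le by (intro mult_mono) auto
  then have "absv (a i * (u ^ i - v ^ i)) \<le> absv (u - v)" for i
    by simp
  then have "absv ((\<Sum>i<n. a i * u ^ i) - (\<Sum>i<n. a i * v ^ i)) \<le> absv (u - v)" for n
    by (auto simp: right_diff_distrib simp flip: sum_subtractf intro!: absv_sum_le)
  then show ?thesis
    using ps_sums_ps_eval[OF assms(4)] ps_sums_ps_eval[OF assms(5)]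
    unfolding ps_sums_def by (rule limit_dist_le[rotated 2])
qed

lemma coeff_le_H_norm:
  assumes "absv c = r" "in_H absv r a"
  shows "absv (a i) * r ^ i \<le> H_norm absv r a"
proof -
  obtain s where s: "ps_sums absv a c s"
    using assms unfolding in_H_def by auto
  define S where "S n = (\<Sum>i<n. a i * c ^ i)" for n
  have "Bseq (\<lambda>n. absv (S n - s))"
    using s unfolding ps_sums_def S_def by (intro convergent_imp_Bseq convergentI)
  then obtain K where K0: "norm (absv (S n - s)) \<le> K" for n
    by (meson BseqE)
  have K: "absv (S n - s) \<le> K" for n
    using abs_ge_self[of "absv (S n - s)"] K0[of n] unfolding real_norm_def by linarith
  have "absv (a n) * r ^ n \<le> K" for n
  proof -
    have "absv ((S (Suc n) - s) - (S n - s)) \<le> K"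
      by (intro absv_diff_le K)
    then show ?thesis
      using assms(1) by (simp add: S_def)
  qed
  then show ?thesis
    unfolding H_norm_def by (intro cSUP_upper bdd_aboveI2) auto
qed

lemma coeff_le_1_if_H_norm_le_1:
  assumes "absv c = r" "1 \<le> r" "in_H absv r a" "H_norm absv r a \<le> 1"
  shows "absv (a i) \<le> 1"
proof -
  have "absv (a i) * 1 \<le> absv (a i) * r ^ i"
    using \<open>1 \<le> r\<close> by (intro mult_left_mono one_le_power) auto
  also have "\<dots> \<le> 1"
    using coeff_le_H_norm[OF assms(1,3)] assms(4) by (rule order_trans)
  finally show ?thesis
    by simp
qed

lemma iterates_expanding:
  assumes "1 \<le> K"
    and fixed: "\<And>l. l \<in> L \<Longrightarrow> f l c = c"
    and expand: "\<And>l0 l1 z0 z1. l0 \<in> L \<Longrightarrow> l1 \<in> L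
      \<Longrightarrow> absv (z0 - c) \<le> \<rho> \<Longrightarrow> absv (z1 - c) \<le> \<rho> \<Longrightarrow> absv (l0 - l1) \<le> absv (z0 - z1)
      \<Longrightarrow> absv (f l0 z0 - f l1 z1) = K * absv (z0 - z1)"
    and "l0 \<in> L" "l1 \<in> L"
    and "\<And>k. k < M \<Longrightarrow> K ^ k * absv (z0 - c) \<le> \<rho>" "\<And>k. k < M \<Longrightarrow> K ^ k * absv (z1 - c) \<le> \<rho>"
    and "absv (l0 - l1) \<le> absv (z0 - z1)"
  shows "absv ((f l0 ^^ M) z0 - (f l1 ^^ M) z1) = K ^ M * absv (z0 - z1)"
  using assms(6-8)
proof (induction M arbitrary: z0 z1)
  case (Suc M)
  have near: "absv (z0 - c) \<le> \<rho>" "absv (z1 - c) \<le> \<rho>"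
    using Suc.prems(1,2)[of 0] by simp_all
  then have "0 \<le> \<rho>"
    using absv_nonneg order_trans by blast
  have away: "absv (f l z - c) = K * absv (z - c)" if "l \<in> L" "absv (z - c) \<le> \<rho>" for l z
    using expand[OF that(1) that(1) that(2), of c] fixed[OF that(1)] \<open>0 \<le> \<rho>\<close> by simp
  have step: "absv (f l0 z0 - f l1 z1) = K * absv (z0 - z1)"
    using expand[OF \<open>l0 \<in> L\<close> \<open>l1 \<in> L\<close> near Suc.prems(3)] .
  have "absv ((f l0 ^^ M) (f l0 z0) - (f l1 ^^ M) (f l1 z1)) = K ^ M * absv (f l0 z0 - f l1 z1)"
  proof (rule Suc.IH)
    show "K ^ k * absv (f l0 z0 - c) \<le> \<rho>" "K ^ k * absv (f l1 z1 - c) \<le> \<rho>" if "k < M" for k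
      using Suc.prems(1,2)[of "Suc k"] that away \<open>l0 \<in> L\<close> \<open>l1 \<in> L\<close> near
      by (simp_all add: ac_simps)
    have "absv (z0 - z1) \<le> K * absv (z0 - z1)"
      using \<open>1 \<le> K\<close> by (simp add: mult_le_cancel_right1)
    then show "absv (l0 - l1) \<le> absv (f l0 z0 - f l1 z1)"
      using Suc.prems(3) step by linarith
  qed
  then show ?case
    using step by (simp only: funpow_Suc_right comp_apply) (simp add: ac_simps)
qed simp

end

locale complete_ultrametric_abs = ultrametric_abs +
  assumes cauchy_converges: "(\<forall>e>0. \<exists>N. \<forall>m\<ge>N. \<forall>n\<ge>N. absv (X m - X n) < e)
    \<Longrightarrow> \<exists>L. (\<lambda>n. absv (X n - L)) \<longlonglongrightarrow> 0"
begin

lemma contraction_orbit_bounds: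
  assumes "0 \<le> c" "c < 1" and "absv (f 0) \<le> R"
    and contr: "\<And>s t. absv s \<le> R \<Longrightarrow> absv t \<le> R \<Longrightarrow> absv (f s - f t) \<le> c * absv (s - t)"
  shows "absv ((f ^^ n) 0) \<le> absv (f 0)"
    and "absv ((f ^^ Suc n) 0 - (f ^^ n) 0) \<le> c ^ n * absv (f 0)"
proof -
  have shrink: "absv (f s - f t) \<le> absv (s - t)" if "absv s \<le> R" "absv t \<le> R" for s t
    using contr[OF that] assms(1,2)
    by (meson absv_nonneg mult_left_le_one_le less_imp_le order_trans)
  show bounded: "absv ((f ^^ n) 0) \<le> absv (f 0)" for n
  proof (induction n)
    case (Suc n)
    have "absv (f ((f ^^ n) 0) - f 0) \<le> absv (f 0)"
      using shrink[of "(f ^^ n) 0" 0] Suc \<open>absv (f 0) \<le> R\<close>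
        order_trans[OF absv_nonneg \<open>absv (f 0) \<le> R\<close>]
      by simp
    then have "absv ((f ((f ^^ n) 0) - f 0) + f 0) \<le> absv (f 0)"
      by (rule absv_add_le) simp
    then show ?case
      by simp
  qed simp
  show "absv ((f ^^ Suc n) 0 - (f ^^ n) 0) \<le> c ^ n * absv (f 0)"
  proof (induction n)
    case (Suc n)
    have "absv (f ((f ^^ Suc n) 0) - f ((f ^^ n) 0)) \<le> c * absv ((f ^^ Suc n) 0 - (f ^^ n) 0)"
      using order_trans[OF bounded \<open>absv (f 0) \<le> R\<close>] by (intro contr)
    also have "\<dots> \<le> c * (c ^ n * absv (f 0))"
      using Suc \<open>0 \<le> c\<close> by (rule mult_left_mono)
    finally show ?case
      by simp
  qed simp
qed

lemma contraction_fixed_point: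
  assumes "0 \<le> c" "c < 1" and "absv (f 0) \<le> R"
    and contr: "\<And>s t. absv s \<le> R \<Longrightarrow> absv t \<le> R \<Longrightarrow> absv (f s - f t) \<le> c * absv (s - t)"
  shows "\<exists>L. absv L \<le> absv (f 0) \<and> f L = L"
proof -
  define X where "X n = (f ^^ n) 0" for n
  note orbit = contraction_orbit_bounds[OF assms, folded X_def]
  have in_ball: "absv (X n) \<le> R" for n
    using orbit(1) \<open>absv (f 0) \<le> R\<close> by (rule order_trans)
  have "decseq (\<lambda>n. c ^ n * absv (f 0))"
    using assms(1,2) by (intro decseq_SucI mult_right_mono) (auto simp: mult_left_le_one_le)
  moreover have "(\<lambda>n. c ^ n * absv (f 0)) \<longlonglongrightarrow> 0"
    using assms(1,2) by (intro tendsto_mult_left_zero LIMSEQ_power_zero) auto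
  ultimately obtain L where L: "(\<lambda>n. absv (X n - L)) \<longlonglongrightarrow> 0"
    using cauchy_converges cauchy_if_steps_le[of X, OF orbit(2)] by blast
  have "absv (L - 0) \<le> absv (f 0)"
    using limit_dist_le[OF L, of "\<lambda>n. 0" 0] orbit(1) by simp
  then have "absv L \<le> absv (f 0)"
    by simp
  have "absv (X (Suc n) - f L) \<le> absv (X n - L)" for n
  proof -
    have "absv (X (Suc n) - f L) \<le> c * absv (X n - L)"
      using contr[OF in_ball order_trans[OF \<open>absv L \<le> absv (f 0)\<close> \<open>absv (f 0) \<le> R\<close>]]
      by (simp add: X_def)
    also have "\<dots> \<le> absv (X n - L)"
      using assms(1,2) by (intro mult_left_le_one_le) auto
    finally show ?thesis .
  qed
  then have "(\<lambda>n. absv (X (Suc n) - f L)) \<longlonglongrightarrow> 0"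
    by (intro tendsto_sandwich[OF _ _ tendsto_const L] always_eventually allI) simp_all
  then have "f L = L"
    using limit_unique[OF _ LIMSEQ_Suc[OF L]] by blast
  with \<open>absv L \<le> absv (f 0)\<close> show ?thesis
    by blast
qed

end

locale Cp_abs =
  fixes p :: nat and absv :: "'a::field \<Rightarrow> real"
  assumes prime_p: "prime p" and is_Cp: "is_Cp p absv"

sublocale Cp_abs \<subseteq> complete_ultrametric_abs absv
  using is_Cp unfolding is_Cp_def by unfold_locales blast+

context Cp_abs
begin

lemma p_ge_2: "p \<ge> 2"
  using prime_p prime_ge_2_nat by blast

lemma absv_of_int: "n \<noteq> 0 \<Longrightarrow> absv (of_int n) = real p powr (- real (multiplicity (int p) n))"
  using is_Cp unfolding is_Cp_def by blast

lemma absv_of_nat_p: "absv (of_nat p) = 1 / real p"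
proof -
  have "multiplicity (int p) (int p) = 1"
    using p_ge_2 by (intro multiplicity_self) auto
  then show ?thesis
    using absv_of_int[of "int p"] p_ge_2 by (simp add: powr_minus_divide)
qed

lemma inverse_p_le_1: "1 / real p \<le> 1"
  using p_ge_2 by simp

lemma p_power_mult_le_1: "absv x \<le> real p powr (- real M) \<Longrightarrow> real p ^ M * absv x \<le> 1"
  using p_ge_2 mult_left_mono[of "absv x" "real p powr (- real M)" "real p ^ M"]
  by (simp add: powr_minus powr_realpow)

lemma p_power_mult_le_inverse_p:
  assumes "real p ^ M * absv x \<le> 1" "k < M"
  shows "real p ^ k * absv x \<le> 1 / real p"
proof -
  have "real p * (real p ^ k * absv x) \<le> real p ^ M * absv x"
    using assms(2) p_ge_2 by (simp add: mult_right_mono power_increasing flip: mult.assoc power_Suc)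
  then show ?thesis
    using assms(1) p_ge_2 by (simp add: le_divide_eq mult.commute)
qed

lemma divide_p_le_self: "0 \<le> x \<Longrightarrow> x / real p \<le> x"
  using p_ge_2 by (simp add: divide_le_eq mult_le_cancel_left1)

lemma of_nat_p_nonzero: "(of_nat p :: 'a) \<noteq> 0"
  using absv_of_nat_p p_ge_2 by (auto simp del: absv_eq_0_iff)

definition binomial_tail :: "'a \<Rightarrow> 'a" where
  "binomial_tail s = s * ((1 + s) ^ p - 1)"

lemma binomial_tail_contraction:
  assumes "absv s \<le> 1 / real p" "absv t \<le> 1 / real p"
  shows "absv (binomial_tail s - binomial_tail t) \<le> absv (s - t) / real p"
proof -
  have unit: "absv (1 + s) \<le> 1" "absv (1 + t) \<le> 1"
    using assms inverse_p_le_1 by (auto intro!: absv_one_plus_le_1)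
  have "absv ((1 + s) ^ p - 1) \<le> absv s"
    using absv_power_diff_le[OF unit(1), of 1 p] by simp
  then have "absv ((1 + s) ^ p - 1) * absv (s - t) \<le> 1 / real p * absv (s - t)"
    using assms(1) by (intro mult_right_mono) auto
  moreover have "absv ((1 + s) ^ p - (1 + t) ^ p) * absv t \<le> absv (s - t) * (1 / real p)"
    using absv_power_diff_le[OF unit, of p] assms(2) by (intro mult_mono) auto
  moreover have "(1 + s) ^ p - 1 - ((1 + t) ^ p - 1) = (1 + s) ^ p - (1 + t) ^ p"
    by simp
  ultimately show ?thesis
    using absv_mult_diff_le[of "(1 + s) ^ p - 1" s "(1 + t) ^ p - 1" t]
    by (simp add: binomial_tail_def mult.commute)
qed

end

locale Cp_perturbation = Cp_abs p absv for p :: nat and absv :: "'a::field \<Rightarrow> real" +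
  fixes a :: "nat \<Rightarrow> 'a"
  assumes ps_converges: "absv z \<le> 1 \<Longrightarrow> \<exists>s. ps_sums absv a z s"
    and coeff_le_1: "absv (a i) \<le> 1"
begin

abbreviation Q :: "'a \<Rightarrow> 'a" where
  "Q \<equiv> ps_eval absv a"

lemma Q_lipschitz: "absv u \<le> 1 \<Longrightarrow> absv v \<le> 1 \<Longrightarrow> absv (Q u - Q v) \<le> absv (u - v)"
  using ps_converges ps_eval_lipschitz coeff_le_1 by meson

lemma absv_Q_le_1: "absv z \<le> 1 \<Longrightarrow> absv (Q z) \<le> 1"
  using ps_converges absv_ps_eval_le_1 coeff_le_1 by meson

definition base_displacement :: "'a \<Rightarrow> 'a" where
  "base_displacement s = (1 + s) ^ Suc p - (1 + s) + Q (1 + s)"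

lemma Qstar_displacement:
  "Qstar p absv a lam (1 + s) - (1 + s)
    = base_displacement s - (lam / of_nat p) * (s + binomial_tail s)"
  unfolding Qstar_def P_lam_def base_displacement_def binomial_tail_def by (simp add: algebra_simps)

lemma base_displacement_lipschitz:
  assumes "absv s \<le> 1" "absv t \<le> 1"
  shows "absv (base_displacement s - base_displacement t) \<le> absv (s - t)"
proof -
  have "absv ((1 + s) ^ Suc p - (1 + t) ^ Suc p) \<le> absv ((1 + s) - (1 + t))"
    using assms by (intro absv_power_diff_le absv_one_plus_le_1)
  moreover have "absv (Q (1 + s) - Q (1 + t)) \<le> absv ((1 + s) - (1 + t))"
    using assms by (intro Q_lipschitz absv_one_plus_le_1)
  moreover have "base_displacement s - base_displacement t
      = ((1 + s) ^ Suc p - (1 + t) ^ Suc p - (s - t)) + (Q (1 + s) - Q (1 + t))"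
    unfolding base_displacement_def by (simp add: algebra_simps)
  ultimately show ?thesis
    by (auto intro!: absv_add_le absv_diff_le)
qed

lemma absv_base_displacement_le_1: "absv s \<le> 1 \<Longrightarrow> absv (base_displacement s) \<le> 1"
  using base_displacement_lipschitz[of s 0] absv_Q_le_1[of 1]
    absv_add_le[of "base_displacement s - base_displacement 0" 1 "base_displacement 0"]
  by (simp add: base_displacement_def)

definition fixpoint_map :: "'a \<Rightarrow> 'a \<Rightarrow> 'a" where
  "fixpoint_map lam s = s + (of_nat p / lam) * (Qstar p absv a lam (1 + s) - (1 + s))"

lemma fixpoint_map_fixed_iff:
  "lam \<noteq> 0 \<Longrightarrow> fixpoint_map lam s = s \<longleftrightarrow> Qstar p absv a lam (1 + s) = 1 + s"
  unfolding fixpoint_map_def using of_nat_p_nonzero by simp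

lemma fixpoint_map_eq:
  "lam \<noteq> 0 \<Longrightarrow> fixpoint_map lam s = (of_nat p / lam) * base_displacement s - binomial_tail s"
  unfolding fixpoint_map_def Qstar_displacement using of_nat_p_nonzero by (simp add: field_simps)

lemma absv_fixpoint_map_0: "absv lam = 1 \<Longrightarrow> absv (fixpoint_map lam 0) = absv (Q 1) / real p"
  by (subst fixpoint_map_eq) (auto simp: absv_of_nat_p base_displacement_def binomial_tail_def)

lemma fixpoint_map_contraction:
  assumes "absv lam = 1" "absv s \<le> 1 / real p" "absv t \<le> 1 / real p"
  shows "absv (fixpoint_map lam s - fixpoint_map lam t) \<le> 1 / real p * absv (s - t)"
proof -
  have "absv (base_displacement s - base_displacement t) \<le> absv (s - t)"
    using assms(2,3) inverse_p_le_1 by (intro base_displacement_lipschitz) auto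
  then have "absv (of_nat p / lam * (base_displacement s - base_displacement t))
      \<le> 1 / real p * absv (s - t)"
    using assms(1) by (simp add: absv_of_nat_p divide_right_mono)
  moreover have "fixpoint_map lam s - fixpoint_map lam t
      = of_nat p / lam * (base_displacement s - base_displacement t)
        - (binomial_tail s - binomial_tail t)"
    using assms(1) by (subst (1 2) fixpoint_map_eq) (auto simp: algebra_simps)
  ultimately show ?thesis
    using binomial_tail_contraction[OF assms(2,3)] by (auto intro!: absv_diff_le)
qed

lemma fixpoint_map_parameter_lipschitz:
  assumes "absv lam0 = 1" "absv lam1 = 1" "absv s \<le> 1"
  shows "absv (fixpoint_map lam0 s - fixpoint_map lam1 s) \<le> absv (lam0 - lam1) / real p"
proof -
  have "lam0 \<noteq> 0" "lam1 \<noteq> 0"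
    using assms by auto
  then have "fixpoint_map lam0 s - fixpoint_map lam1 s
      = of_nat p * (lam1 - lam0) / (lam0 * lam1) * base_displacement s"
    by (simp add: fixpoint_map_eq field_simps)
  also have "absv \<dots> = absv (lam0 - lam1) / real p * absv (base_displacement s)"
    using assms by (simp add: absv_of_nat_p absv_minus_commute)
  also have "\<dots> \<le> absv (lam0 - lam1) / real p"
    using absv_base_displacement_le_1[OF assms(3)] by (intro mult_left_le) auto
  finally show ?thesis .
qed

lemma fixpoint_map_lipschitz:
  assumes "absv lam0 = 1" "absv lam1 = 1" "absv s0 \<le> 1 / real p" "absv s1 \<le> 1 / real p"
  shows "absv (fixpoint_map lam0 s0 - fixpoint_map lam1 s1)
    \<le> max (absv (lam0 - lam1)) (absv (s0 - s1)) / real p"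
proof -
  have "absv (fixpoint_map lam0 s0 - fixpoint_map lam0 s1) \<le> absv (s0 - s1) / real p"
    using fixpoint_map_contraction[OF assms(1,3,4)] by simp
  moreover have "absv (fixpoint_map lam0 s1 - fixpoint_map lam1 s1) \<le> absv (lam0 - lam1) / real p"
    using assms(4) inverse_p_le_1 by (intro fixpoint_map_parameter_lipschitz assms(1,2)) auto
  moreover have "absv (s0 - s1) / real p \<le> max (absv (lam0 - lam1)) (absv (s0 - s1)) / real p"
    "absv (lam0 - lam1) / real p \<le> max (absv (lam0 - lam1)) (absv (s0 - s1)) / real p"
    by (simp_all add: divide_right_mono)
  ultimately have "absv ((fixpoint_map lam0 s0 - fixpoint_map lam0 s1)
      + (fixpoint_map lam0 s1 - fixpoint_map lam1 s1))
      \<le> max (absv (lam0 - lam1)) (absv (s0 - s1)) / real p"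
    by (intro absv_add_le) linarith+
  then show ?thesis
    by simp
qed

lemma fixpoint_map_fixed_unique:
  assumes "absv lam = 1" "absv s \<le> 1 / real p" "absv t \<le> 1 / real p"
    and "fixpoint_map lam s = s" "fixpoint_map lam t = t"
  shows "s = t"
proof -
  have "1 / real p < 1"
    using p_ge_2 by simp
  then have "absv (s - t) \<le> absv (fixpoint_map lam t - fixpoint_map lam t)"
    by (rule fixed_point_dist_le[where f = "fixpoint_map lam" and g = "fixpoint_map lam",
          OF _ fixpoint_map_contraction[OF assms(1-3)] assms(4,5)])
  then show ?thesis
    by simp
qed

lemma hfix_fixed_point:
  assumes "absv lam = 1"
  shows "fixpoint_map lam (hfix p absv a lam - 1) = hfix p absv a lam - 1"
    and "absv (hfix p absv a lam - 1) \<le> 1 / real p"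
proof -
  have "lam \<noteq> 0"
    using assms by auto
  have bound: "absv (Q 1) / real p \<le> 1 / real p"
    using absv_Q_le_1[of 1] by (simp add: divide_right_mono)
  obtain L where L: "absv L \<le> absv (Q 1) / real p" "fixpoint_map lam L = L"
    using contraction_fixed_point[of "1 / real p" "fixpoint_map lam" "1 / real p"]
      fixpoint_map_contraction[OF assms] absv_fixpoint_map_0[OF assms] bound p_ge_2 by auto
  have "z = 1 + L" if "absv (z - 1) \<le> absv (Q 1) / real p" "Qstar p absv a lam z = z" for z
    using fixpoint_map_fixed_unique[OF assms, of "z - 1" L]
      fixpoint_map_fixed_iff[OF \<open>lam \<noteq> 0\<close>, of "z - 1"]
      that L bound by (simp add: algebra_simps)
  moreover have "absv ((1 + L) - 1) \<le> absv (Q 1) / real p \<and> Qstar p absv a lam (1 + L) = 1 + L"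
    using L fixpoint_map_fixed_iff[OF \<open>lam \<noteq> 0\<close>] by simp
  ultimately have "hfix p absv a lam = 1 + L"
    unfolding hfix_def by (intro the_equality) auto
  with L bound show "fixpoint_map lam (hfix p absv a lam - 1) = hfix p absv a lam - 1"
    and "absv (hfix p absv a lam - 1) \<le> 1 / real p"
    by simp_all
qed

lemma hfix_lipschitz:
  assumes "absv lam0 = 1" "absv lam1 = 1"
  shows "absv (hfix p absv a lam0 - hfix p absv a lam1) \<le> absv (lam0 - lam1) / real p"
proof -
  define t0 where "t0 = hfix p absv a lam0 - 1"
  define t1 where "t1 = hfix p absv a lam1 - 1"
  have t: "absv t0 \<le> 1 / real p" "absv t1 \<le> 1 / real p"
    unfolding t0_def t1_def using assms by (simp_all add: hfix_fixed_point)
  have "1 / real p < 1"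
    using p_ge_2 by simp
  then have "absv (t0 - t1) \<le> absv (fixpoint_map lam0 t1 - fixpoint_map lam1 t1)"
    using hfix_fixed_point(1)[OF assms(1)] hfix_fixed_point(1)[OF assms(2)]
    by (intro fixed_point_dist_le[where f = "fixpoint_map lam0",
          OF _ fixpoint_map_contraction[OF assms(1) t]]) (simp_all add: t0_def t1_def)
  also have "\<dots> \<le> absv (lam0 - lam1) / real p"
    using t(2) inverse_p_le_1 by (intro fixpoint_map_parameter_lipschitz assms) auto
  finally show ?thesis
    by (simp add: t0_def t1_def)
qed

definition Qlam_remainder :: "'a \<Rightarrow> 'a \<Rightarrow> 'a" where
  "Qlam_remainder lam w =
    (let t = hfix p absv a lam - 1
     in w + (lam / of_nat p) * (fixpoint_map lam (t + w) - fixpoint_map lam t))"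

lemma Qlam_shift:
  assumes "absv lam = 1"
  shows "Qlam p absv a lam (1 + w) = 1 + Qlam_remainder lam w - (lam / of_nat p) * w"
proof -
  define t where "t = hfix p absv a lam - 1"
  have "lam \<noteq> 0"
    using assms by auto
  have Qstar: "Qstar p absv a lam (1 + s) = 1 + s + (lam / of_nat p) * (fixpoint_map lam s - s)"
    for s
    using \<open>lam \<noteq> 0\<close> of_nat_p_nonzero by (simp add: fixpoint_map_def)
  have "Qlam p absv a lam (1 + w) = Qstar p absv a lam (1 + (t + w)) - t"
    unfolding Qlam_def Qstar_def t_def Let_def by (simp add: algebra_simps)
  also have "\<dots> = 1 + w + (lam / of_nat p) * (fixpoint_map lam (t + w) - fixpoint_map lam t)
      - (lam / of_nat p) * w"
    using hfix_fixed_point(1)[OF assms]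
    by (simp add: Qstar algebra_simps add_divide_distrib flip: t_def)
  finally show ?thesis
    by (simp add: Qlam_remainder_def Let_def flip: t_def)
qed

lemma fixpoint_map_increment_lipschitz:
  assumes lam: "absv lam0 = 1" "absv lam1 = 1"
    and t: "absv t0 \<le> 1 / real p" "absv t1 \<le> 1 / real p"
    and w: "absv w0 \<le> 1 / real p" "absv w1 \<le> 1 / real p"
    and d: "absv (lam0 - lam1) \<le> d" "absv (t0 - t1) \<le> d" "absv (w0 - w1) \<le> d"
  shows "absv (lam0 * (fixpoint_map lam0 (t0 + w0) - fixpoint_map lam0 t0)
    - lam1 * (fixpoint_map lam1 (t1 + w1) - fixpoint_map lam1 t1)) \<le> d / real p"
proof -
  define D0 where "D0 = fixpoint_map lam0 (t0 + w0) - fixpoint_map lam0 t0"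
  define D1 where "D1 = fixpoint_map lam1 (t1 + w1) - fixpoint_map lam1 t1"
  have u: "absv (t0 + w0) \<le> 1 / real p" "absv (t1 + w1) \<le> 1 / real p"
    using t w by (simp_all add: absv_add_le)
  have "absv ((t0 - t1) + (w0 - w1)) \<le> d"
    using d by (intro absv_add_le)
  then have "absv (fixpoint_map lam0 (t0 + w0) - fixpoint_map lam1 (t1 + w1)) \<le> d / real p"
    using d(1) by (intro order_trans[OF fixpoint_map_lipschitz[OF lam u] divide_right_mono])
      (auto simp: add_diff_add)
  moreover have "absv (fixpoint_map lam0 t0 - fixpoint_map lam1 t1) \<le> d / real p"
    using d(1,2) by (intro order_trans[OF fixpoint_map_lipschitz[OF lam t] divide_right_mono]) auto
  ultimately have "absv ((fixpoint_map lam0 (t0 + w0) - fixpoint_map lam1 (t1 + w1))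
      - (fixpoint_map lam0 t0 - fixpoint_map lam1 t1)) \<le> d / real p"
    by (rule absv_diff_le)
  then have "absv lam0 * absv (D0 - D1) \<le> d / real p"
    using lam(1) by (simp add: D0_def D1_def algebra_simps)
  have "absv D1 \<le> 1 / real p * absv w1"
    using fixpoint_map_contraction[OF lam(2) u(2) t(2)] by (simp add: D1_def)
  also have "\<dots> \<le> 1 / real p"
    using w(2) inverse_p_le_1 by (intro mult_left_le) auto
  finally have "absv (lam0 - lam1) * absv D1 \<le> d * (1 / real p)"
    using d(1) by (intro mult_mono) (auto intro: order_trans[OF absv_nonneg])
  with \<open>absv lam0 * absv (D0 - D1) \<le> d / real p\<close> show ?thesis
    using absv_mult_diff_le[of lam0 D0 lam1 D1] by (simp add: D0_def D1_def)
qed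

lemma Qlam_remainder_lipschitz:
  assumes lam: "absv lam0 = 1" "absv lam1 = 1"
    and w: "absv w0 \<le> 1 / real p" "absv w1 \<le> 1 / real p"
  shows "absv (Qlam_remainder lam0 w0 - Qlam_remainder lam1 w1)
    \<le> max (absv (lam0 - lam1)) (absv (w0 - w1))"
    (is "_ \<le> ?d")
proof -
  define t0 where "t0 = hfix p absv a lam0 - 1"
  define t1 where "t1 = hfix p absv a lam1 - 1"
  define D where "D = lam0 * (fixpoint_map lam0 (t0 + w0) - fixpoint_map lam0 t0)
    - lam1 * (fixpoint_map lam1 (t1 + w1) - fixpoint_map lam1 t1)"
  have t: "absv t0 \<le> 1 / real p" "absv t1 \<le> 1 / real p"
    unfolding t0_def t1_def using lam by (simp_all add: hfix_fixed_point)
  have "absv (t0 - t1) \<le> absv (lam0 - lam1)"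
    using hfix_lipschitz[OF lam] divide_p_le_self[of "absv (lam0 - lam1)"]
    by (simp add: t0_def t1_def)
  then have "absv D \<le> ?d / real p"
    unfolding D_def by (intro fixpoint_map_increment_lipschitz lam t w) auto
  then have "absv (D / of_nat p) \<le> ?d"
    using p_ge_2 by (simp add: absv_of_nat_p pos_le_divide_eq)
  moreover have "Qlam_remainder lam0 w0 - Qlam_remainder lam1 w1 = (w0 - w1) + D / of_nat p"
    unfolding Qlam_remainder_def Let_def t0_def t1_def D_def
    using of_nat_p_nonzero by (simp add: field_simps)
  ultimately show ?thesis
    by (metis absv_add_le max.cobounded2)
qed

lemma Qlam_fixes_1: "absv lam = 1 \<Longrightarrow> Qlam p absv a lam 1 = 1"
  using Qlam_shift[of lam 0] by (simp add: Qlam_remainder_def)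

lemma Qlam_expanding:
  assumes lam: "absv lam0 = 1" "absv lam1 = 1"
    and z: "absv (z0 - 1) \<le> 1 / real p" "absv (z1 - 1) \<le> 1 / real p"
    and "absv (lam0 - lam1) \<le> absv (z0 - z1)"
  shows "absv (Qlam p absv a lam0 z0 - Qlam p absv a lam1 z1) = real p * absv (z0 - z1)"
proof (cases "z0 = z1")
  case True
  then show ?thesis
    using \<open>absv (lam0 - lam1) \<le> absv (z0 - z1)\<close> by simp
next
  case False
  define w0 where "w0 = z0 - 1"
  define w1 where "w1 = z1 - 1"
  define d where "d = absv (z0 - z1)"
  have "d > 0"
    using False by (simp add: d_def)
  have "absv (lam0 - lam1) * absv w1 \<le> d * (1 / real p)"
    using \<open>absv (lam0 - lam1) \<le> absv (z0 - z1)\<close> z(2)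
    by (intro mult_mono) (simp_all add: d_def w1_def)
  also have "\<dots> < d"
    using \<open>d > 0\<close> p_ge_2 by (simp add: divide_less_eq)
  finally have "absv (lam0 * (w0 - w1) + (lam0 - lam1) * w1) = d"
    using lam(1) by (subst absv_add_dominant) (simp_all add: w0_def w1_def d_def)
  then have linear: "absv (- ((lam0 / of_nat p) * w0 - (lam1 / of_nat p) * w1)) = real p * d"
    by (simp add: absv_of_nat_p algebra_simps flip: diff_divide_distrib)
  have "absv (Qlam_remainder lam0 w0 - Qlam_remainder lam1 w1) \<le> d"
    using Qlam_remainder_lipschitz[OF lam, of w0 w1] z \<open>absv (lam0 - lam1) \<le> absv (z0 - z1)\<close>
    by (simp add: w0_def w1_def d_def)
  also have "\<dots> < real p * d"
    using \<open>d > 0\<close> p_ge_2 by simp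
  finally have "absv (- ((lam0 / of_nat p) * w0 - (lam1 / of_nat p) * w1)
      + (Qlam_remainder lam0 w0 - Qlam_remainder lam1 w1)) = real p * d"
    using linear by (simp add: absv_add_dominant)
  moreover have "Qlam p absv a lam0 z0 - Qlam p absv a lam1 z1
      = - ((lam0 / of_nat p) * w0 - (lam1 / of_nat p) * w1)
        + (Qlam_remainder lam0 w0 - Qlam_remainder lam1 w1)"
    using Qlam_shift[OF lam(1), of w0] Qlam_shift[OF lam(2), of w1] by (simp add: w0_def w1_def)
  ultimately show ?thesis
    by (simp add: d_def)
qed

lemma Qlam_iterates_expanding:
  assumes "absv lam0 = 1" "absv lam1 = 1"
    and "real p ^ M * absv (x0 - 1) \<le> 1" "real p ^ M * absv (x1 - 1) \<le> 1"
    and "absv (lam0 - lam1) \<le> absv (x0 - x1)"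
  shows "absv ((Qlam p absv a lam0 ^^ M) x0 - (Qlam p absv a lam1 ^^ M) x1)
    = real p ^ M * absv (x0 - x1)"
  using assms p_ge_2 Qlam_fixes_1 Qlam_expanding p_power_mult_le_inverse_p
  by (intro iterates_expanding[where L = "{lam. absv lam = 1}" and c = 1 and \<rho> = "1 / real p"]) auto

end

lemma (in Cp_abs) Cp_perturbation_if_H_norm_small:
  assumes "absv c = r" "r > 1" "in_H absv r a" "H_norm absv r a < real p powr (- 1 / (real p - 1))"
  shows "Cp_perturbation p absv a"
proof
  have "real p powr (- 1 / (real p - 1)) \<le> real p powr 0"
    using p_ge_2 by (intro powr_mono) auto
  then show "absv (a i) \<le> 1" for i
    using assms p_ge_2 by (intro coeff_le_1_if_H_norm_le_1) auto
  show "\<exists>s. ps_sums absv a z s" if "absv z \<le> 1" for z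
    using assms(2,3) that unfolding in_H_def by simp
qed

theorem lemma3p12:
  fixes p M :: nat and absv :: "'a::field \<Rightarrow> real" and r :: real
    and a :: "nat \<Rightarrow> 'a" and x0 x1 lam0 lam1 :: 'a
  assumes "prime p"
    and "is_Cp p absv"
    and "\<exists>c. c \<noteq> 0 \<and> absv c = r" and "r > 1"
    and "in_H absv r a"
    and "H_norm absv r a < real p powr (- 1 / (real p - 1))"
    and "M \<ge> 1"
    and "absv (x0 - 1) \<le> real p powr (- real M)"
    and "absv (x1 - 1) \<le> real p powr (- real M)"
    and "absv (lam0 - 1) < 1" and "absv (lam1 - 1) < 1"
    and "absv (lam0 - lam1) = absv (x0 - x1)"
  shows "absv ((Qlam p absv a lam0 ^^ M) x0 - (Qlam p absv a lam1 ^^ M) x1)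
           = real p ^ M * absv (lam0 - lam1)"
proof -
  interpret Cp_abs p absv
    using assms(1,2) by unfold_locales
  obtain c where "absv c = r"
    using assms(3) by blast
  interpret Cp_perturbation p absv a
    using Cp_perturbation_if_H_norm_small[OF \<open>absv c = r\<close> assms(4-6)] .
  have "absv lam0 = 1" "absv lam1 = 1"
    using assms(10,11) by (simp_all add: absv_eq_1_if_near_1)
  moreover have "real p ^ M * absv (x0 - 1) \<le> 1" "real p ^ M * absv (x1 - 1) \<le> 1"
    using assms(8,9) by (simp_all add: p_power_mult_le_1)
  ultimately show ?thesis
    using Qlam_iterates_expanding assms(12) by simp
qed

end
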